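(* Let $\mathcal{V}$ be a non-trivial quantale, $\widehat{\mathsf{F}}$ a lax extension of a functor $\mathsf{F}\colon\mathbf{Set}\to\mathbf{Set}$ to $\mathbf{Rel}(\mathcal{V})$, and $\alpha\colon X\to\mathsf{F}X$ an $\mathsf{F}$-coalgebra. Every symmetric $\widehat{\mathsf{F}}$-simulation $s$ on $\alpha$ satisfies $\alpha\cdot s\le\widehat{\mathsf{F}}^s s\cdot\alpha$, i.e. is an $\widehat{\mathsf{F}}^s$-simulation, where $\widehat{\mathsf{F}}^s s=\widehat{\mathsf{F}}s\wedge(\widehat{\mathsf{F}}s)^\circ$.
   Context: A quantale $(\mathcal{V},\otimes,k)$ is a complete lattice with commutative monoid structure, each $u\otimes-$ preserving joins, $\hom(u,-)$ its right adjoint; non-trivial: $\bot\ne\top$. $\mathcal{V}$-relations $r\colon X\nrightarrow Y$ are maps $X\times Y\to\mathcal{V}$, composed by $(s\cdot r)(x,z)=\bigvee_y r(x,y)\otimes s(y,z)$, converse $r^\circ(y,x)=r(x,y)$, ordered pointwise, meets pointwise; a function (e.g. $\alpha$) is viewed as the relation with value $k$ on its graph and $\bot$ elsewhere. A lax extension of $\mathsf{F}$ assigns to each $r\colon X\nrightarrow Y$ a $\widehat{\mathsf{F}}r\colon\mathsf{F}X\nrightarrow\mathsf{F}Y$ with (L1) $r\le r'\Rightarrow\widehat{\mathsf{F}}r\le\widehat{\mathsf{F}}r'$, (L2) $\widehat{\mathsf{F}}s\cdot\widehat{\mathsf{F}}r\le\widehat{\mathsf{F}}(s\cdot r)$, (L3)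 $\mathsf{F}f\le\widehat{\mathsf{F}}f$, $(\mathsf{F}f)^\circ\le\widehat{\mathsf{F}}(f^\circ)$. A $\mathcal{V}$-relation $s\colon X\nrightarrow X$ is symmetric if $s=s^\circ$, and is an $\widehat{\mathsf{F}}$-simulation on $\alpha$ if $\alpha\cdot s\le\widehat{\mathsf{F}}s\cdot\alpha$. *)

theory Defs
  imports Main
begin

text \<open>A quantale: complete lattice with a commutative monoid structure (tensor = *, unit k = 1)
  such that each a * - preserves all joins. (Its right adjoint hom(a,-) then exists automatically.)\<close>
class quantale = complete_lattice + comm_monoid_mult +
  assumes mult_Sup_distrib: "a * Sup A = (SUP b\<in>A. a * b)"

type_synonym ('x, 'y, 'v) vrel = "'x \<Rightarrow> 'y \<Rightarrow> 'v"

definition vcomp :: "('y, 'z, 'v::quantale) vrel \<Rightarrow> ('x, 'y, 'v) vrel \<Rightarrow> ('x, 'z, 'v) vrel" where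
  "vcomp s r = (\<lambda>x z. SUP y. r x y * s y z)"

definition vconv :: "('x, 'y, 'v::quantale) vrel \<Rightarrow> ('y, 'x, 'v) vrel" where
  "vconv r = (\<lambda>y x. r x y)"

definition vgraph :: "('x \<Rightarrow> 'y) \<Rightarrow> ('x, 'y, 'v::quantale) vrel" where
  "vgraph f = (\<lambda>x y. if f x = y then 1 else bot)"

definition endofunctor :: "(('x \<Rightarrow> 'x) \<Rightarrow> 'fx \<Rightarrow> 'fx) \<Rightarrow> bool" where
  "endofunctor Fm \<longleftrightarrow> Fm id = id \<and> (\<forall>f g. Fm (g \<circ> f) = Fm g \<circ> Fm f)"

definition lax_extension ::
  "(('x \<Rightarrow> 'x) \<Rightarrow> 'fx \<Rightarrow> 'fx) \<Rightarrow> (('x, 'x, 'v::quantale) vrel \<Rightarrow> ('fx, 'fx, 'v) vrel) \<Rightarrow> bool" where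
  "lax_extension Fm L \<longleftrightarrow>
     (\<forall>r r'. r \<le> r' \<longrightarrow> L r \<le> L r') \<and>
     (\<forall>r s. vcomp (L s) (L r) \<le> L (vcomp s r)) \<and>
     (\<forall>f. vgraph (Fm f) \<le> L (vgraph f) \<and> vconv (vgraph (Fm f)) \<le> L (vconv (vgraph f)))"

definition symmetric_vrel :: "('x, 'x, 'v::quantale) vrel \<Rightarrow> bool" where
  "symmetric_vrel s \<longleftrightarrow> s = vconv s"

definition simulation ::
  "(('x, 'x, 'v::quantale) vrel \<Rightarrow> ('fx, 'fx, 'v) vrel) \<Rightarrow> ('x \<Rightarrow> 'fx) \<Rightarrow> ('x, 'x, 'v) vrel \<Rightarrow> bool" where
  "simulation L \<alpha> s \<longleftrightarrow> vcomp (vgraph \<alpha>) s \<le> vcomp (L s) (vgraph \<alpha>)"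

definition symmetrise ::
  "(('x, 'x, 'v::quantale) vrel \<Rightarrow> ('fx, 'fx, 'v) vrel) \<Rightarrow> ('x, 'x, 'v) vrel \<Rightarrow> ('fx, 'fx, 'v) vrel" where
  "symmetrise L s = inf (L s) (vconv (L s))"

end

theory Submission
  imports Defs
begin

text \<open>Since \<alpha> is a function, \<alpha> \<cdot> s \<le> R \<cdot> \<alpha> says exactly that s x y \<le> R (\<alpha> x) (\<alpha> y) for all x, y.
  For symmetric s this bound also holds with the arguments of R swapped, i.e. for the
  converse of R, hence for the meet defining the symmetrisation. No property of the lax
  extension is needed.\<close>

lemma quantale_mult_bot_right [simp]: "(a::'v::quantale) * bot = bot"
  using mult_Sup_distrib[of a "{}"] by simp

lemma quantale_mult_bot_left [simp]: "bot * (a::'v::quantale) = bot"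
  by (metis quantale_mult_bot_right mult.commute)

lemma vcomp_vgraph_right: "vcomp R (vgraph f) x z = R (f x) z"
proof (rule antisym)
  show "vcomp R (vgraph f) x z \<le> R (f x) z"
    unfolding vcomp_def vgraph_def by (rule SUP_least) auto
  show "R (f x) z \<le> vcomp R (vgraph f) x z"
    unfolding vcomp_def vgraph_def by (rule SUP_upper2[of "f x"]) auto
qed

lemma vcomp_vgraph_le_vcomp_vgraph_iff:
  "vcomp (vgraph g) s \<le> vcomp R (vgraph f) \<longleftrightarrow> (\<forall>x y. s x y \<le> R (f x) (g y))"
proof
  assume le: "vcomp (vgraph g) s \<le> vcomp R (vgraph f)"
  show "\<forall>x y. s x y \<le> R (f x) (g y)"
  proof (intro allI)
    fix x y
    have "s x y \<le> vcomp (vgraph g) s x (g y)"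
      unfolding vcomp_def vgraph_def by (rule SUP_upper2[of y]) auto
    also have "\<dots> \<le> vcomp R (vgraph f) x (g y)"
      using le by (simp add: le_fun_def)
    finally show "s x y \<le> R (f x) (g y)"
      by (simp add: vcomp_vgraph_right)
  qed
next
  assume "\<forall>x y. s x y \<le> R (f x) (g y)"
  then show "vcomp (vgraph g) s \<le> vcomp R (vgraph f)"
    unfolding le_fun_def vcomp_vgraph_right
    unfolding vcomp_def vgraph_def by (auto intro!: SUP_least)
qed

lemma simulation_iff: "simulation L \<alpha> s \<longleftrightarrow> (\<forall>x y. s x y \<le> L s (\<alpha> x) (\<alpha> y))"
  by (simp add: simulation_def vcomp_vgraph_le_vcomp_vgraph_iff)

lemma symmetric_simulation_imp_simulation_symmetrise:
  assumes "symmetric_vrel s" and "simulation L \<alpha> s"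
  shows "simulation (symmetrise L) \<alpha> s"
proof -
  have sim: "s x y \<le> L s (\<alpha> x) (\<alpha> y)" for x y
    using assms(2) by (simp add: simulation_iff)
  have sym: "s x y = s y x" for x y
    using assms(1) by (metis symmetric_vrel_def vconv_def)
  have "s x y \<le> symmetrise L s (\<alpha> x) (\<alpha> y)" for x y
    using sim[of x y] sim[of y x] sym[of x y] by (simp add: symmetrise_def vconv_def)
  then show ?thesis
    by (simp add: simulation_iff)
qed

theorem proposition9:
  fixes Fm :: "('x \<Rightarrow> 'x) \<Rightarrow> 'fx \<Rightarrow> 'fx"
    and L :: "('x, 'x, 'v::quantale) vrel \<Rightarrow> ('fx, 'fx, 'v) vrel"
    and \<alpha> :: "'x \<Rightarrow> 'fx"
    and s :: "('x, 'x, 'v) vrel"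
  assumes "(bot::'v) \<noteq> top"
    and "endofunctor Fm"
    and "lax_extension Fm L"
    and "symmetric_vrel s"
    and "simulation L \<alpha> s"
  shows "vcomp (vgraph \<alpha>) s \<le> vcomp (symmetrise L s) (vgraph \<alpha>)"
  using symmetric_simulation_imp_simulation_symmetrise[OF assms(4,5)]
  by (simp add: simulation_def)

end
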